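(* A profile $(D_n,G_n,\mathbf q_n)_{n\in\mathcal N}$ is a Variational Equilibrium of the peer-to-peer game if and only if it is an optimal solution of the centralized problem (P). That is, the set of Variational Equilibria coincides with the set of social welfare maximizers.
   Context: Model. $\mathcal N$ is a finite set of nodes (agents) containing a root node $0$. Each node $n$ has a neighborhood $\Omega_n\subseteq\mathcal N$ with $n\in\Omega_n$; the neighbor relation is symmetric ($m\in\Omega_n\iff n\in\Omega_m$) and every node is a neighbor of the root. Decision variables: demand $D_n$, flexibility activation $G_n$, and for each $m\in\Omega_n\setminus\{n\}$ a trade $q_{mn}\in\mathbb R$ (quantity sent from $m$ to $n$; $q_{mn}>0$ means $n$ buys from $m$). The net import of $n$ is $Q_n=\sum_{m\in\Omega_n\setminus\{n\}}q_{mn}$. Parameters: $0\le\underline D_n\le\overline D_n$, $0\le\underline G_n\le\overline G_n$, capacities $\kappa_{nm}=\kappa_{mn}\in[0,\infty)$, exogenous renewable generation $\Delta G_n$, constants $a_n,b_n,d_n>0$, $\tilde a_n,\tilde b_n>0$, target demand $D_n^\star$, preference prices $c_{nm}>0$. Costs/utilities: $C_n(G)=\tfrac12 a_nG^2+b_nG+d_n$, $U_n(D)=-\tilde a_n(D-D_n^\star)^2+\tilde b_n$, $\tilde C_n(\mathbf q_n)=\sum_{m\in\Omega_n\setminus\{n\}}c_{nm}q_{mn}$, $\Pi_n=U_n(D_n)-C_n(G_n)-\tilde C_n(\mathbf q_n)$, $SW=\sum_{n\in\mathcal N}\Pi_n$. Centralized problem (P): maximize $SW$ over $(\mathbf D,\mathbf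 G,\mathbf q)$ subject to (1) $\underline D_n\le D_n\le\overline D_n$; (2) $\underline G_n\le G_n\le\overline G_n$; (3) $q_{mn}\le\kappa_{mn}$ for all $n$ and $m\in\Omega_n\setminus\{n\}$; (4) $q_{mn}+q_{nm}\le0$ for each pair of distinct neighbors; (5) $D_n=G_n+\Delta G_n+Q_n$ for all $n$. Peer-to-peer game: agent $n$ controls $(D_n,G_n,\mathbf q_n)$ with $\mathbf q_n=(q_{mn})_{m\in\Omega_n\setminus\{n\}}$ and, taking the other agents' variables as given, maximizes $\Pi_n$ subject to $\underline D_n\le D_n\le\overline D_n$ (multipliers $\underline\mu_n,\overline\mu_n$), $\underline G_n\le G_n\le\overline G_n$ ($\underline\nu_n,\overline\nu_n$), $q_{mn}\le\kappa_{mn}$ for $m\in\Omega_n\setminus\{n\}$ ($\xi_{nm}$), the coupling constraints $q_{mn}\le-q_{nm}$ for $m\in\Omega_n\setminus\{n\}$ ($\zeta_{nm}$), and $D_n=G_n+\Delta G_n+Q_n$ ($\lambda_n$). The system $KKT_n$ consists of $2\tilde a_n(D_n-D_n^\star)-\underline\mu_n+\overline\mu_n+\lambda_n=0$, $a_nG_n+b_n-\underline\nu_n+\overline\nu_n-\lambda_n=0$, $c_{nm}+\xi_{nm}+\zeta_{nm}-\lambda_n=0$ for $m\in\Omega_n\setminus\{n\}$, feasibility, and complementarity $0\le\underline\mu_n\perp D_n-\underline D_n\ge0$, $0\le\overline\mu_n\perp\overline D_n-D_n\ge0$, $0\le\underline\nu_n\perp G_n-\underline G_n\ge0$, $0\le\overline\nu_n\perp\overline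 G_n-G_n\ge0$, $0\le\xi_{nm}\perp\kappa_{mn}-q_{mn}\ge0$, $0\le\zeta_{nm}\perp-q_{mn}-q_{nm}\ge0$ for all $m\in\Omega_n\setminus\{n\}$. A Generalized Nash Equilibrium (GNE) is a profile such that for each $n$ there are multipliers with $KKT_n$ satisfied (equivalently, each agent's variables solve her problem given the others'). A Variational Equilibrium is a GNE whose multipliers can be chosen so that in addition $\zeta_{nm}=\zeta_{mn}$ for all $n$ and $m\in\Omega_n\setminus\{n\}$. *)

theory Defs
  imports Main "HOL.Real"
begin

text \<open>Parameters of the peer-to-peer energy market.
  Trades are encoded as q :: 'n => 'n => real, with q m n the quantity sent
  from m to n (only meaningful for neighbours m of n, m distinct from n).\<close>

record 'n market =
  nodes :: "'n set"
  root  :: 'n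
  nbr   :: "'n \<Rightarrow> 'n set"
  Dlo   :: "'n \<Rightarrow> real"
  Dhi   :: "'n \<Rightarrow> real"
  Glo   :: "'n \<Rightarrow> real"
  Ghi   :: "'n \<Rightarrow> real"
  kap   :: "'n \<Rightarrow> 'n \<Rightarrow> real"
  dG    :: "'n \<Rightarrow> real"
  ca    :: "'n \<Rightarrow> real"
  cb    :: "'n \<Rightarrow> real"
  cd    :: "'n \<Rightarrow> real"
  ua    :: "'n \<Rightarrow> real"
  ub    :: "'n \<Rightarrow> real"
  Dstar :: "'n \<Rightarrow> real"
  pref  :: "'n \<Rightarrow> 'n \<Rightarrow> real"

definition valid_market :: "'n market \<Rightarrow> bool" where
  "valid_market M \<longleftrightarrow>
     finite (nodes M) \<and> root M \<in> nodes M \<and>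
     (\<forall>n\<in>nodes M. n \<in> nbr M n \<and> nbr M n \<subseteq> nodes M) \<and>
     (\<forall>n\<in>nodes M. \<forall>m\<in>nodes M. m \<in> nbr M n \<longleftrightarrow> n \<in> nbr M m) \<and>
     (\<forall>n\<in>nodes M. n \<in> nbr M (root M)) \<and>
     (\<forall>n\<in>nodes M. 0 \<le> Dlo M n \<and> Dlo M n \<le> Dhi M n) \<and>
     (\<forall>n\<in>nodes M. 0 \<le> Glo M n \<and> Glo M n \<le> Ghi M n) \<and>
     (\<forall>n\<in>nodes M. \<forall>m\<in>nodes M. kap M n m = kap M m n \<and> 0 \<le> kap M n m) \<and>
     (\<forall>n\<in>nodes M. ca M n > 0 \<and> cb M n > 0 \<and> cd M n > 0 \<and> ua M n > 0 \<and> ub M n > 0) \<and>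
     (\<forall>n\<in>nodes M. \<forall>m\<in>nbr M n - {n}. pref M n m > 0)"

definition netimp :: "'n market \<Rightarrow> ('n \<Rightarrow> 'n \<Rightarrow> real) \<Rightarrow> 'n \<Rightarrow> real" where
  "netimp M q n = (\<Sum>m\<in>nbr M n - {n}. q m n)"

definition costG :: "'n market \<Rightarrow> 'n \<Rightarrow> real \<Rightarrow> real" where
  "costG M n g = ca M n * g\<^sup>2 / 2 + cb M n * g + cd M n"

definition util :: "'n market \<Rightarrow> 'n \<Rightarrow> real \<Rightarrow> real" where
  "util M n x = - ua M n * (x - Dstar M n)\<^sup>2 + ub M n"

definition costT :: "'n market \<Rightarrow> ('n \<Rightarrow> 'n \<Rightarrow> real) \<Rightarrow> 'n \<Rightarrow> real" where
  "costT M q n = (\<Sum>m\<in>nbr M n - {n}. pref M n m * q m n)"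

definition payoff :: "'n market \<Rightarrow> ('n \<Rightarrow> real) \<Rightarrow> ('n \<Rightarrow> real) \<Rightarrow> ('n \<Rightarrow> 'n \<Rightarrow> real) \<Rightarrow> 'n \<Rightarrow> real" where
  "payoff M D G q n = util M n (D n) - costG M n (G n) - costT M q n"

definition SW :: "'n market \<Rightarrow> ('n \<Rightarrow> real) \<Rightarrow> ('n \<Rightarrow> real) \<Rightarrow> ('n \<Rightarrow> 'n \<Rightarrow> real) \<Rightarrow> real" where
  "SW M D G q = (\<Sum>n\<in>nodes M. payoff M D G q n)"

definition feasibleP :: "'n market \<Rightarrow> ('n \<Rightarrow> real) \<Rightarrow> ('n \<Rightarrow> real) \<Rightarrow> ('n \<Rightarrow> 'n \<Rightarrow> real) \<Rightarrow> bool" where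
  "feasibleP M D G q \<longleftrightarrow>
     (\<forall>n\<in>nodes M. Dlo M n \<le> D n \<and> D n \<le> Dhi M n) \<and>
     (\<forall>n\<in>nodes M. Glo M n \<le> G n \<and> G n \<le> Ghi M n) \<and>
     (\<forall>n\<in>nodes M. \<forall>m\<in>nbr M n - {n}. q m n \<le> kap M m n) \<and>
     (\<forall>n\<in>nodes M. \<forall>m\<in>nbr M n - {n}. q m n + q n m \<le> 0) \<and>
     (\<forall>n\<in>nodes M. D n = G n + dG M n + netimp M q n)"

definition optimalP :: "'n market \<Rightarrow> ('n \<Rightarrow> real) \<Rightarrow> ('n \<Rightarrow> real) \<Rightarrow> ('n \<Rightarrow> 'n \<Rightarrow> real) \<Rightarrow> bool" where
  "optimalP M D G q \<longleftrightarrow> feasibleP M D G q \<and>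
     (\<forall>D' G' q'. feasibleP M D' G' q' \<longrightarrow> SW M D' G' q' \<le> SW M D G q)"

definition KKT :: "'n market \<Rightarrow> ('n \<Rightarrow> real) \<Rightarrow> ('n \<Rightarrow> real) \<Rightarrow> ('n \<Rightarrow> 'n \<Rightarrow> real) \<Rightarrow> 'n \<Rightarrow>
    real \<Rightarrow> real \<Rightarrow> real \<Rightarrow> real \<Rightarrow> ('n \<Rightarrow> real) \<Rightarrow> ('n \<Rightarrow> real) \<Rightarrow> real \<Rightarrow> bool" where
  "KKT M D G q n mul muh nul nuh xi zeta lam \<longleftrightarrow>
     2 * ua M n * (D n - Dstar M n) - mul + muh + lam = 0 \<and>
     ca M n * G n + cb M n - nul + nuh - lam = 0 \<and>
     (\<forall>m\<in>nbr M n - {n}. pref M n m + xi m + zeta m - lam = 0) \<and>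
     \<comment> \<open>feasibility\<close>
     Dlo M n \<le> D n \<and> D n \<le> Dhi M n \<and>
     Glo M n \<le> G n \<and> G n \<le> Ghi M n \<and>
     (\<forall>m\<in>nbr M n - {n}. q m n \<le> kap M m n) \<and>
     (\<forall>m\<in>nbr M n - {n}. q m n \<le> - q n m) \<and>
     D n = G n + dG M n + netimp M q n \<and>
     \<comment> \<open>sign and complementarity\<close>
     0 \<le> mul \<and> mul * (D n - Dlo M n) = 0 \<and>
     0 \<le> muh \<and> muh * (Dhi M n - D n) = 0 \<and>
     0 \<le> nul \<and> nul * (G n - Glo M n) = 0 \<and>
     0 \<le> nuh \<and> nuh * (Ghi M n - G n) = 0 \<and>
     (\<forall>m\<in>nbr M n - {n}. 0 \<le> xi m \<and> xi m * (kap M m n - q m n) = 0) \<and>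
     (\<forall>m\<in>nbr M n - {n}. 0 \<le> zeta m \<and> zeta m * (- q m n - q n m) = 0)"

definition GNE :: "'n market \<Rightarrow> ('n \<Rightarrow> real) \<Rightarrow> ('n \<Rightarrow> real) \<Rightarrow> ('n \<Rightarrow> 'n \<Rightarrow> real) \<Rightarrow> bool" where
  "GNE M D G q \<longleftrightarrow>
     (\<forall>n\<in>nodes M. \<exists>mul muh nul nuh xi zeta lam. KKT M D G q n mul muh nul nuh xi zeta lam)"

definition VE :: "'n market \<Rightarrow> ('n \<Rightarrow> real) \<Rightarrow> ('n \<Rightarrow> real) \<Rightarrow> ('n \<Rightarrow> 'n \<Rightarrow> real) \<Rightarrow> bool" where
  "VE M D G q \<longleftrightarrow>
     (\<exists>mul muh nul nuh :: 'n \<Rightarrow> real. \<exists>xi zeta :: 'n \<Rightarrow> 'n \<Rightarrow> real. \<exists>lam :: 'n \<Rightarrow> real.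
        (\<forall>n\<in>nodes M. KKT M D G q n (mul n) (muh n) (nul n) (nuh n) (xi n) (zeta n) (lam n)) \<and>
        (\<forall>n\<in>nodes M. \<forall>m\<in>nbr M n - {n}. zeta n m = zeta m n))"

end

theory Submission
  imports Defs Complex_Main
begin

text \<open>The centralized problem (P) maximises a concave quadratic function over a polyhedron,
  so its optimal points are exactly the feasible points admitting Lagrange multipliers:
  sufficiency is the supporting-hyperplane inequality of the concave objective, necessity
  follows from Farkas' lemma applied to the constraints active at the optimum (a short step
  along any direction violating the multiplier condition would stay feasible and increase
  the welfare). In (P) the coupling constraint q m n + q n m \<le> 0 of a trading pair occurs
  once for each endpoint; collecting the multipliers per agent therefore gives precisely the
  agents' KKT systems with a common multiplier \<zeta> n m = \<zeta> m n, i.e. a variational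
  equilibrium, and conversely.\<close>

definition linear_form :: "(('k \<Rightarrow> real) \<Rightarrow> real) \<Rightarrow> bool" where
  "linear_form f \<longleftrightarrow> (\<forall>x y t. f (\<lambda>k. x k + t * y k) = f x + t * f y)"

lemma linear_formD: "linear_form f \<Longrightarrow> f (\<lambda>k. x k + t * y k) = f x + t * f y"
  unfolding linear_form_def by blast

lemma linear_form_diff:
  assumes "linear_form f" shows "f (\<lambda>k. x k - t * y k) = f x - t * f y"
  using linear_formD[OF assms, of x "-t" y] by simp

lemma linear_form_zero:
  assumes "linear_form f" shows "f (\<lambda>k. 0) = 0"
  using linear_formD[OF assms, of "\<lambda>k. 0" 1 "\<lambda>k. 0"] by simp

lemma linear_form_sub:
  assumes "linear_form f" shows "f (\<lambda>k. x k - y k) = f x - f y"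
  using linear_form_diff[OF assms, of x 1 y] by simp

lemma linear_form_lincomb:
  assumes "linear_form f" "linear_form g"
  shows "linear_form (\<lambda>x. f x - t * g x)"
  using assms unfolding linear_form_def by (simp add: algebra_simps)

definition hyperplane_projection ::
    "('k \<Rightarrow> real) \<Rightarrow> (('k \<Rightarrow> real) \<Rightarrow> real) \<Rightarrow> ('k \<Rightarrow> real) \<Rightarrow> ('k \<Rightarrow> real)" where
  "hyperplane_projection x0 g x = (\<lambda>k. x k - (g x / g x0) * x0 k)"

lemma linear_form_hyperplane_projection:
  assumes "linear_form f"
  shows "f (hyperplane_projection x0 g x) = f x - (f x0 / g x0) * g x"
  using linear_form_diff[OF assms, of x "g x / g x0" x0]
  unfolding hyperplane_projection_def by simp

lemma hyperplane_projection_kernel: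
  assumes "linear_form g" "g x0 \<noteq> 0"
  shows "g (hyperplane_projection x0 g x) = 0"
  using linear_form_hyperplane_projection[OF assms(1)] assms(2) by simp

lemma linear_form_comp_hyperplane_projection:
  assumes "linear_form f" "linear_form g"
  shows "linear_form (\<lambda>x. f (hyperplane_projection x0 g x))"
  unfolding linear_form_hyperplane_projection[OF assms(1)]
  using linear_form_lincomb[OF assms, of "f x0 / g x0"] by simp

text \<open>Fourier--Motzkin elimination of one constraint a j: if the smaller system does not
  already imply c \<le> 0, a witness x0 has a j x0 > 0, and composing everything with the
  projection along x0 onto the hyperplane a j = 0 yields a smaller instance.\<close>
lemma farkas_lemma:
  assumes "finite I" "\<And>i. i \<in> I \<Longrightarrow> linear_form (a i)" "linear_form c"
    and "\<And>x. \<forall>i\<in>I. a i x \<le> 0 \<Longrightarrow> c x \<le> 0"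
  shows "\<exists>l. (\<forall>i\<in>I. 0 \<le> l i) \<and> (\<forall>x. c x = (\<Sum>i\<in>I. l i * a i x))"
  using assms
proof (induction I arbitrary: a c rule: finite_induct)
  case empty
  have "c x = 0" for x
    using empty.prems(3)[of x] empty.prems(3)[of "\<lambda>k. - x k"]
      linear_form_diff[OF empty.prems(2), of "\<lambda>k. 0" 1 x] linear_form_zero[OF empty.prems(2)]
    by simp
  then show ?case by simp
next
  case (insert j J)
  have lin_aj: "linear_form (a j)" using insert.prems(1) by blast
  show ?case
  proof (cases "\<forall>x. (\<forall>i\<in>J. a i x \<le> 0) \<longrightarrow> c x \<le> 0")
    case True
    then obtain l where "\<forall>i\<in>J. 0 \<le> l i" "\<forall>x. c x = (\<Sum>i\<in>J. l i * a i x)"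
      using insert by blast
    moreover have "(\<Sum>i\<in>J. (l(j := 0)) i * a i x) = (\<Sum>i\<in>J. l i * a i x)" for x
      using insert.hyps(2) by (intro sum.cong) auto
    ultimately show ?thesis
      using insert.hyps by (intro exI[of _ "l(j := 0)"]) auto
  next
    case False
    then obtain x0 where x0: "\<forall>i\<in>J. a i x0 \<le> 0" "c x0 > 0" by force
    define p where "p = a j x0"
    have p: "p > 0"
      using insert.prems(3)[of x0] x0 unfolding p_def by force
    let ?proj = "hyperplane_projection x0 (a j)"
    have "\<exists>l. (\<forall>i\<in>J. 0 \<le> l i) \<and> (\<forall>x. c (?proj x) = (\<Sum>i\<in>J. l i * a i (?proj x)))"
    proof (rule insert.IH)
      show "linear_form (\<lambda>x. a i (?proj x))" if "i \<in> J" for i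
        using linear_form_comp_hyperplane_projection insert.prems(1) that by blast
      show "linear_form (\<lambda>x. c (?proj x))"
        using linear_form_comp_hyperplane_projection insert.prems(1,2) by blast
      show "c (?proj x) \<le> 0" if "\<forall>i\<in>J. a i (?proj x) \<le> 0" for x
        using insert.prems(3) that hyperplane_projection_kernel[OF lin_aj] p
        unfolding p_def by fastforce
    qed
    then obtain l where l: "\<forall>i\<in>J. 0 \<le> l i"
      and l_proj: "\<forall>x. c (?proj x) = (\<Sum>i\<in>J. l i * a i (?proj x))" by blast
    define lj where "lj = (c x0 - (\<Sum>i\<in>J. l i * a i x0)) / p"
    have "(\<Sum>i\<in>J. l i * a i x0) \<le> 0"
      using l x0(1) by (intro sum_nonpos) (simp add: mult_nonneg_nonpos)
    then have "0 \<le> lj" unfolding lj_def using p x0(2) by simp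
    moreover have "c x = lj * a j x + (\<Sum>i\<in>J. l i * a i x)" for x
    proof -
      have "c x = c (?proj x) + (c x0 / p) * a j x"
        using linear_form_hyperplane_projection[OF insert.prems(2)] unfolding p_def by simp
      also have "c (?proj x) = (\<Sum>i\<in>J. l i * (a i x - (a i x0 / p) * a j x))"
        using l_proj linear_form_hyperplane_projection[OF insert.prems(1)] unfolding p_def
        by (auto intro!: sum.cong)
      also have "\<dots> = (\<Sum>i\<in>J. l i * a i x) - (\<Sum>i\<in>J. l i * a i x0) / p * a j x"
        by (simp add: right_diff_distrib sum_subtractf sum_distrib_right sum_divide_distrib mult.assoc)
      finally show ?thesis unfolding lj_def using p by (simp add: field_simps)
    qed
    moreover have "(\<Sum>i\<in>J. (l(j := lj)) i * a i x) = (\<Sum>i\<in>J. l i * a i x)" for x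
      using insert.hyps(2) by (intro sum.cong) auto
    ultimately show ?thesis
      using l insert.hyps by (intro exI[of _ "l(j := lj)"]) auto
  qed
qed

locale concave_quadratic_program =
  fixes f :: "('k \<Rightarrow> real) \<Rightarrow> real"
    and grad :: "('k \<Rightarrow> real) \<Rightarrow> ('k \<Rightarrow> real) \<Rightarrow> real"
    and curv :: "('k \<Rightarrow> real) \<Rightarrow> real"
    and I :: "'i set"
    and A :: "'i \<Rightarrow> ('k \<Rightarrow> real) \<Rightarrow> real"
    and b :: "'i \<Rightarrow> real"
  assumes finite_constraints: "finite I"
    and linear_constraints: "i \<in> I \<Longrightarrow> linear_form (A i)"
    and linear_grad: "linear_form (grad p)"
    and objective_expansion: "f (\<lambda>k. p k + e * d k) = f p + e * grad p d - e\<^sup>2 * curv d"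
    and curv_nonneg: "0 \<le> curv d"
begin

definition feasible :: "('k \<Rightarrow> real) \<Rightarrow> bool" where
  "feasible x \<longleftrightarrow> (\<forall>i\<in>I. 0 \<le> A i x + b i)"

definition lagrange_multipliers :: "('k \<Rightarrow> real) \<Rightarrow> ('i \<Rightarrow> real) \<Rightarrow> bool" where
  "lagrange_multipliers p l \<longleftrightarrow>
     (\<forall>i\<in>I. 0 \<le> l i \<and> l i * (A i p + b i) = 0) \<and>
     (\<forall>d. grad p d + (\<Sum>i\<in>I. l i * A i d) = 0)"

lemma lagrange_multipliers_imp_max:
  assumes "lagrange_multipliers p l" "feasible x"
  shows "f x \<le> f p"
proof -
  define d where "d = (\<lambda>k. x k - p k)"
  have "x = (\<lambda>k. p k + 1 * d k)" unfolding d_def by simp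
  then have "f x \<le> f p + grad p d"
    using objective_expansion[of p 1 d] curv_nonneg[of d] by simp
  moreover have "grad p d = - (\<Sum>i\<in>I. l i * (A i x + b i))"
  proof -
    have "grad p d = - (\<Sum>i\<in>I. l i * A i d)"
      using assms(1) unfolding lagrange_multipliers_def by (simp add: eq_neg_iff_add_eq_0)
    also have "(\<Sum>i\<in>I. l i * A i d) = (\<Sum>i\<in>I. l i * (A i x + b i) - l i * (A i p + b i))"
      unfolding d_def by (intro sum.cong) (simp_all add: linear_form_sub linear_constraints algebra_simps)
    also have "\<dots> = (\<Sum>i\<in>I. l i * (A i x + b i))"
      using assms(1) unfolding lagrange_multipliers_def by (intro sum.cong) auto
    finally show ?thesis .
  qed
  moreover have "(\<Sum>i\<in>I. l i * (A i x + b i)) \<ge> 0"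
    using assms unfolding lagrange_multipliers_def feasible_def by (intro sum_nonneg) simp
  ultimately show ?thesis by linarith
qed

lemma eventually_feasible_step:
  assumes "feasible p" and active: "\<And>i. i \<in> I \<Longrightarrow> A i p + b i = 0 \<Longrightarrow> 0 \<le> A i d"
  shows "eventually (\<lambda>e. feasible (\<lambda>k. p k + e * d k)) (at_right 0)"
  unfolding feasible_def
proof (rule eventually_ball_finite[OF finite_constraints], intro ballI)
  fix i assume i: "i \<in> I"
  have step: "A i (\<lambda>k. p k + e * d k) + b i = A i p + b i + e * A i d" for e
    using linear_formD[OF linear_constraints[OF i]] by simp
  show "eventually (\<lambda>e. 0 \<le> A i (\<lambda>k. p k + e * d k) + b i) (at_right 0)"
  proof (cases "A i p + b i = 0")
    case True
    then show ?thesis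
      unfolding step eventually_at_right_field using active[OF i] by (auto intro!: exI[of _ 1])
  next
    case False
    then have slack: "0 < A i p + b i" using assms(1) i unfolding feasible_def by force
    show ?thesis
      unfolding step eventually_at_right_field
    proof (intro exI[of _ "(A i p + b i) / (\<bar>A i d\<bar> + 1)"] conjI allI impI)
      fix e :: real assume e: "0 < e" "e < (A i p + b i) / (\<bar>A i d\<bar> + 1)"
      have "- (e * A i d) \<le> e * (\<bar>A i d\<bar> + 1)"
        using e(1) mult_left_mono[of "- A i d" "\<bar>A i d\<bar> + 1" e] by simp
      also have "\<dots> < A i p + b i" using e(2) by (simp add: field_simps add_pos_nonneg)
      finally show "0 \<le> A i p + b i + e * A i d" by simp
    qed (use slack in simp)
  qed
qed

lemma eventually_objective_increase:
  assumes "0 < grad p d"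
  shows "eventually (\<lambda>e. f p < f (\<lambda>k. p k + e * d k)) (at_right 0)"
  unfolding objective_expansion eventually_at_right_field
proof (intro exI[of _ "grad p d / (curv d + 1)"] conjI allI impI)
  fix e :: real assume e: "0 < e" "e < grad p d / (curv d + 1)"
  have "e * curv d \<le> e * (curv d + 1)" using e(1) by simp
  also have "\<dots> < grad p d" using e(2) curv_nonneg[of d] by (simp add: field_simps add_nonneg_pos)
  finally have "0 < e * (grad p d - e * curv d)" using e(1) by simp
  then show "f p < f p + e * grad p d - e\<^sup>2 * curv d" by (simp add: power2_eq_square algebra_simps)
qed (use assms curv_nonneg[of d] in simp)

lemma max_imp_lagrange_multipliers:
  assumes "feasible p" and max: "\<And>x. feasible x \<Longrightarrow> f x \<le> f p"
  shows "\<exists>l. lagrange_multipliers p l"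
proof -
  define J where "J = {i \<in> I. A i p + b i = 0}"
  have "\<exists>l. (\<forall>i\<in>J. 0 \<le> l i) \<and> (\<forall>d. grad p d = (\<Sum>i\<in>J. l i * - A i d))"
  proof (rule farkas_lemma)
    show "finite J" unfolding J_def using finite_constraints by simp
    show "linear_form (\<lambda>d. - A i d)" if "i \<in> J" for i
      using linear_constraints that unfolding J_def linear_form_def by (simp add: algebra_simps)
    show "linear_form (grad p)" by (rule linear_grad)
    show "grad p d \<le> 0" if "\<forall>i\<in>J. - A i d \<le> 0" for d
    proof (rule ccontr)
      assume "\<not> grad p d \<le> 0"
      then have "eventually (\<lambda>e. feasible (\<lambda>k. p k + e * d k) \<and> f p < f (\<lambda>k. p k + e * d k)) (at_right 0)"
        using eventually_feasible_step[OF assms(1)] eventually_objective_increase that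
        unfolding J_def by (intro eventually_conj) auto
      then obtain e where "feasible (\<lambda>k. p k + e * d k)" "f p < f (\<lambda>k. p k + e * d k)"
        using eventually_happens'[OF trivial_limit_at_right_real] by blast
      then show False using max by fastforce
    qed
  qed
  then obtain l where l: "\<forall>i\<in>J. 0 \<le> l i" "\<forall>d. grad p d = (\<Sum>i\<in>J. l i * - A i d)" by blast
  define l' where "l' i = (if i \<in> J then l i else 0)" for i
  have "(\<Sum>i\<in>I. l' i * A i d) = (\<Sum>i\<in>J. l i * A i d)" for d
  proof -
    have "(\<Sum>i\<in>I. l' i * A i d) = (\<Sum>i\<in>I. if A i p + b i = 0 then l i * A i d else 0)"
      unfolding l'_def J_def by (intro sum.cong) auto
    then show ?thesis unfolding J_def using finite_constraints by (simp add: sum.inter_filter)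
  qed
  then have "lagrange_multipliers p l'"
    using l unfolding lagrange_multipliers_def l'_def J_def by (auto simp: sum_negf)
  then show ?thesis by blast
qed

theorem max_iff_lagrange_multipliers:
  assumes "feasible p"
  shows "(\<forall>x. feasible x \<longrightarrow> f x \<le> f p) \<longleftrightarrow> (\<exists>l. lagrange_multipliers p l)"
  using max_imp_lagrange_multipliers[OF assms] lagrange_multipliers_imp_max by blast

end

abbreviation peers :: "'n market \<Rightarrow> 'n \<Rightarrow> 'n set" where
  "peers M n \<equiv> nbr M n - {n}"

lemma valid_marketD:
  assumes "valid_market M"
  shows "finite (nodes M)"
    and "n \<in> nodes M \<Longrightarrow> nbr M n \<subseteq> nodes M"
    and "n \<in> nodes M \<Longrightarrow> m \<in> nodes M \<Longrightarrow> m \<in> nbr M n \<longleftrightarrow> n \<in> nbr M m"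
    and "n \<in> nodes M \<Longrightarrow> 0 < ua M n"
    and "n \<in> nodes M \<Longrightarrow> 0 < ca M n"
  using assms unfolding valid_market_def by simp_all

lemma valid_market_peers:
  assumes "valid_market M" "n \<in> nodes M" "m \<in> peers M n"
  shows "m \<in> nodes M" "n \<in> peers M m"
  using valid_marketD(2,3)[OF assms(1)] assms(2,3) by blast+

lemma valid_market_finite_peers:
  assumes "valid_market M" "n \<in> nodes M"
  shows "finite (peers M n)"
  using finite_subset[OF valid_marketD(2)[OF assms] valid_marketD(1)[OF assms(1)]] by simp

lemma sum_peers_swap:
  assumes "valid_market M"
  shows "(\<Sum>n\<in>nodes M. \<Sum>m\<in>peers M n. f n m) = (\<Sum>n\<in>nodes M. \<Sum>m\<in>peers M n. f m n)"
proof -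
  have fin: "finite (nodes M)" using valid_marketD(1)[OF assms] .
  have peers_eq: "{m \<in> nodes M. m \<in> peers M n} = peers M n" if "n \<in> nodes M" for n
    using valid_market_peers(1)[OF assms that] by blast
  have peers_sym: "{n \<in> nodes M. m \<in> peers M n} = peers M m" if "m \<in> nodes M" for m
    using valid_market_peers[OF assms] that by blast
  have "(\<Sum>n\<in>nodes M. \<Sum>m\<in>peers M n. f n m) = (\<Sum>n\<in>nodes M. \<Sum>m\<in>{m \<in> nodes M. m \<in> peers M n}. f n m)"
    by (rule sum.cong[OF refl]) (simp only: peers_eq)
  also have "\<dots> = (\<Sum>m\<in>nodes M. \<Sum>n\<in>{n \<in> nodes M. m \<in> peers M n}. f n m)"
    by (rule sum.swap_restrict[OF fin fin])
  also have "\<dots> = (\<Sum>m\<in>nodes M. \<Sum>n\<in>peers M m. f n m)"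
    by (rule sum.cong[OF refl]) (simp only: peers_sym)
  finally show ?thesis .
qed

datatype 'n coord = Dem 'n | Gen 'n | Trade 'n 'n

fun profile :: "('n \<Rightarrow> real) \<Rightarrow> ('n \<Rightarrow> real) \<Rightarrow> ('n \<Rightarrow> 'n \<Rightarrow> real) \<Rightarrow> 'n coord \<Rightarrow> real" where
  "profile D G q (Dem n) = D n"
| "profile D G q (Gen n) = G n"
| "profile D G q (Trade m n) = q m n"

lemma profile_coords: "profile (\<lambda>n. p (Dem n)) (\<lambda>n. p (Gen n)) (\<lambda>m n. p (Trade m n)) = p"
proof
  fix v show "profile (\<lambda>n. p (Dem n)) (\<lambda>n. p (Gen n)) (\<lambda>m n. p (Trade m n)) v = p v"
    by (cases v) simp_all
qed

definition welfare :: "'n market \<Rightarrow> ('n coord \<Rightarrow> real) \<Rightarrow> real" where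
  "welfare M p = SW M (\<lambda>n. p (Dem n)) (\<lambda>n. p (Gen n)) (\<lambda>m n. p (Trade m n))"

definition nodal_form :: "'n market \<Rightarrow> ('n \<Rightarrow> real) \<Rightarrow> ('n \<Rightarrow> real) \<Rightarrow> ('n \<Rightarrow> 'n \<Rightarrow> real) \<Rightarrow>
    ('n coord \<Rightarrow> real) \<Rightarrow> real" where
  "nodal_form M \<alpha> \<beta> \<gamma> d =
     (\<Sum>n\<in>nodes M. \<alpha> n * d (Dem n) + \<beta> n * d (Gen n) + (\<Sum>m\<in>peers M n. \<gamma> n m * d (Trade m n)))"

lemma linear_form_nodal_form: "linear_form (nodal_form M \<alpha> \<beta> \<gamma>)"
  unfolding linear_form_def nodal_form_def
  by (simp add: sum.distrib sum_distrib_left algebra_simps)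

lemma nodal_form_add:
  "nodal_form M \<alpha> \<beta> \<gamma> d + nodal_form M \<alpha>' \<beta>' \<gamma>' d =
   nodal_form M (\<lambda>n. \<alpha> n + \<alpha>' n) (\<lambda>n. \<beta> n + \<beta>' n) (\<lambda>n m. \<gamma> n m + \<gamma>' n m) d"
  unfolding nodal_form_def by (simp add: sum.distrib algebra_simps)

lemma nodal_form_unit:
  assumes "finite (nodes M)" "n \<in> nodes M" "finite (peers M n)"
  shows "nodal_form M \<alpha> \<beta> \<gamma> (\<lambda>v. if v = Dem n then 1 else 0) = \<alpha> n"
    "nodal_form M \<alpha> \<beta> \<gamma> (\<lambda>v. if v = Gen n then 1 else 0) = \<beta> n"
    "m \<in> peers M n \<Longrightarrow> nodal_form M \<alpha> \<beta> \<gamma> (\<lambda>v. if v = Trade m n then 1 else 0) = \<gamma> n m"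
proof -
  show "nodal_form M \<alpha> \<beta> \<gamma> (\<lambda>v. if v = Dem n then 1 else 0) = \<alpha> n"
    "nodal_form M \<alpha> \<beta> \<gamma> (\<lambda>v. if v = Gen n then 1 else 0) = \<beta> n"
    using assms unfolding nodal_form_def by (simp_all add: if_distrib[of "\<lambda>x. _ * x"] cong: if_cong)
  assume m: "m \<in> peers M n"
  have "nodal_form M \<alpha> \<beta> \<gamma> (\<lambda>v. if v = Trade m n then 1 else 0) =
    (\<Sum>n'\<in>nodes M. if n' = n then (\<Sum>m'\<in>peers M n. if m' = m then \<gamma> n m else 0) else 0)"
    unfolding nodal_form_def by (intro sum.cong) (auto intro!: sum.cong split: if_splits)
  then show "nodal_form M \<alpha> \<beta> \<gamma> (\<lambda>v. if v = Trade m n then 1 else 0) = \<gamma> n m"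
    using assms m by simp
qed

lemma nodal_form_eq_zero_iff:
  assumes "valid_market M"
  shows "(\<forall>d. nodal_form M \<alpha> \<beta> \<gamma> d = 0) \<longleftrightarrow>
    (\<forall>n\<in>nodes M. \<alpha> n = 0 \<and> \<beta> n = 0 \<and> (\<forall>m\<in>peers M n. \<gamma> n m = 0))"
proof
  assume zero: "\<forall>d. nodal_form M \<alpha> \<beta> \<gamma> d = 0"
  show "\<forall>n\<in>nodes M. \<alpha> n = 0 \<and> \<beta> n = 0 \<and> (\<forall>m\<in>peers M n. \<gamma> n m = 0)"
  proof (intro ballI conjI)
    fix n assume n: "n \<in> nodes M"
    note unit = nodal_form_unit[OF valid_marketD(1)[OF assms] n valid_market_finite_peers[OF assms n]]
    show "\<alpha> n = 0" "\<beta> n = 0" using unit(1,2) zero by metis+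
    show "\<gamma> n m = 0" if "m \<in> peers M n" for m using unit(3)[OF that] zero by metis
  qed
qed (simp add: nodal_form_def)

definition welfare_grad :: "'n market \<Rightarrow> ('n coord \<Rightarrow> real) \<Rightarrow> ('n coord \<Rightarrow> real) \<Rightarrow> real" where
  "welfare_grad M p = nodal_form M (\<lambda>n. - 2 * ua M n * (p (Dem n) - Dstar M n))
     (\<lambda>n. - (ca M n * p (Gen n) + cb M n)) (\<lambda>n m. - pref M n m)"

definition welfare_curv :: "'n market \<Rightarrow> ('n coord \<Rightarrow> real) \<Rightarrow> real" where
  "welfare_curv M d = (\<Sum>n\<in>nodes M. ua M n * (d (Dem n))\<^sup>2 + ca M n * (d (Gen n))\<^sup>2 / 2)"

lemma payoff_expansion:
  "payoff M (\<lambda>n. D n + e * dDem n) (\<lambda>n. G n + e * dGen n) (\<lambda>m n. q m n + e * dq m n) n =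
   payoff M D G q n
   + e * (- 2 * ua M n * (D n - Dstar M n) * dDem n - (ca M n * G n + cb M n) * dGen n
          - (\<Sum>m\<in>peers M n. pref M n m * dq m n))
   - e\<^sup>2 * (ua M n * (dDem n)\<^sup>2 + ca M n * (dGen n)\<^sup>2 / 2)"
proof -
  have "costT M (\<lambda>m n. q m n + e * dq m n) n = costT M q n + e * (\<Sum>m\<in>peers M n. pref M n m * dq m n)"
    unfolding costT_def by (simp add: sum.distrib sum_distrib_left algebra_simps)
  then show ?thesis
    unfolding payoff_def util_def costG_def by (simp add: power2_eq_square field_simps)
qed

lemma welfare_expansion:
  "welfare M (\<lambda>k. p k + e * d k) = welfare M p + e * welfare_grad M p d - e\<^sup>2 * welfare_curv M d"
  unfolding welfare_def SW_def welfare_grad_def welfare_curv_def nodal_form_def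
    payoff_expansion[of M "\<lambda>n. p (Dem n)"]
  by (simp add: sum.distrib sum_subtractf sum_distrib_left sum_negf algebra_simps)

datatype constraint_kind = DemLo | DemHi | GenLo | GenHi | BalUp | BalDown | Cap | Coupling

lemma UNIV_constraint_kind:
  "(UNIV :: constraint_kind set) = {DemLo, DemHi, GenLo, GenHi, BalUp, BalDown, Cap, Coupling}"
  using constraint_kind.exhaust by auto

lemma finite_UNIV_constraint_kind [simp]: "finite (UNIV :: constraint_kind set)"
  unfolding UNIV_constraint_kind by simp

text \<open>Constraint (k, n, m) of agent n reads 0 \<le> constraint_lin M (k, n, m) p + constraint_const M (k, n, m);
  BalUp and BalDown are the two halves of the balance equation (5).\<close>
definition constraint_partners :: "'n market \<Rightarrow> constraint_kind \<Rightarrow> 'n \<Rightarrow> 'n set" where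
  "constraint_partners M k n = (if k \<in> {Cap, Coupling} then peers M n else {n})"

definition constraints :: "'n market \<Rightarrow> (constraint_kind \<times> 'n \<times> 'n) set" where
  "constraints M = (SIGMA k:UNIV. SIGMA n:nodes M. constraint_partners M k n)"

fun constraint_lin :: "'n market \<Rightarrow> constraint_kind \<times> 'n \<times> 'n \<Rightarrow> ('n coord \<Rightarrow> real) \<Rightarrow> real" where
  "constraint_lin M (DemLo, n, m) p = p (Dem n)"
| "constraint_lin M (DemHi, n, m) p = - p (Dem n)"
| "constraint_lin M (GenLo, n, m) p = p (Gen n)"
| "constraint_lin M (GenHi, n, m) p = - p (Gen n)"
| "constraint_lin M (BalUp, n, m) p = p (Gen n) + (\<Sum>m'\<in>peers M n. p (Trade m' n)) - p (Dem n)"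
| "constraint_lin M (BalDown, n, m) p = p (Dem n) - p (Gen n) - (\<Sum>m'\<in>peers M n. p (Trade m' n))"
| "constraint_lin M (Cap, n, m) p = - p (Trade m n)"
| "constraint_lin M (Coupling, n, m) p = - (p (Trade m n) + p (Trade n m))"

fun constraint_const :: "'n market \<Rightarrow> constraint_kind \<times> 'n \<times> 'n \<Rightarrow> real" where
  "constraint_const M (DemLo, n, m) = - Dlo M n"
| "constraint_const M (DemHi, n, m) = Dhi M n"
| "constraint_const M (GenLo, n, m) = - Glo M n"
| "constraint_const M (GenHi, n, m) = Ghi M n"
| "constraint_const M (BalUp, n, m) = dG M n"
| "constraint_const M (BalDown, n, m) = - dG M n"
| "constraint_const M (Cap, n, m) = kap M m n"
| "constraint_const M (Coupling, n, m) = 0"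

lemma valid_market_finite_constraints:
  assumes "valid_market M"
  shows "finite (constraints M)"
  unfolding constraints_def constraint_partners_def
  using valid_marketD(1)[OF assms] valid_market_finite_peers[OF assms]
  by (intro finite_SigmaI) (simp_all add: UNIV_constraint_kind)

lemma linear_form_constraint_lin: "linear_form (constraint_lin M i)"
proof -
  obtain k n m where "i = (k, n, m)" by (cases i) auto
  then show ?thesis
    unfolding linear_form_def by (cases k) (simp_all add: sum.distrib sum_distrib_left algebra_simps)
qed

lemma ball_constraints:
  "(\<forall>i\<in>constraints M. P i) \<longleftrightarrow>
    (\<forall>n\<in>nodes M. P (DemLo, n, n) \<and> P (DemHi, n, n) \<and> P (GenLo, n, n) \<and> P (GenHi, n, n) \<and>
      P (BalUp, n, n) \<and> P (BalDown, n, n) \<and> (\<forall>m\<in>peers M n. P (Cap, n, m) \<and> P (Coupling, n, m)))"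
  unfolding constraints_def constraint_partners_def by (auto simp: UNIV_constraint_kind)

lemma feasibleP_iff_constraints:
  "feasibleP M D G q \<longleftrightarrow>
     (\<forall>i\<in>constraints M. 0 \<le> constraint_lin M i (profile D G q) + constraint_const M i)"
  unfolding ball_constraints feasibleP_def netimp_def
  by (simp only: profile.simps constraint_lin.simps constraint_const.simps add_0_right neg_0_le_iff_le)
    auto

lemma sum_constraints:
  assumes "valid_market M"
  shows "(\<Sum>i\<in>constraints M. F i) =
    (\<Sum>n\<in>nodes M. F (DemLo, n, n) + F (DemHi, n, n) + F (GenLo, n, n) + F (GenHi, n, n) +
      F (BalUp, n, n) + F (BalDown, n, n) + (\<Sum>m\<in>peers M n. F (Cap, n, m) + F (Coupling, n, m)))"
proof -
  have fin: "finite (nodes M)" "\<And>n. n \<in> nodes M \<Longrightarrow> finite (peers M n)"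
    using valid_marketD(1)[OF assms] valid_market_finite_peers[OF assms] by auto
  have fin_partners: "finite (constraint_partners M k n)" if "n \<in> nodes M" for k n
    using fin(2)[OF that] unfolding constraint_partners_def by simp
  have "(\<Sum>i\<in>constraints M. F i) =
      (\<Sum>k\<in>UNIV. \<Sum>p\<in>Sigma (nodes M) (constraint_partners M k). F (k, p))"
    unfolding constraints_def using fin(1) fin_partners
    by (subst sum.Sigma) (auto intro!: finite_SigmaI)
  also have "\<dots> = (\<Sum>k\<in>UNIV. \<Sum>n\<in>nodes M. \<Sum>m\<in>constraint_partners M k n. F (k, n, m))"
    using fin(1) fin_partners by (simp add: sum.Sigma)
  also have "\<dots> = (\<Sum>n\<in>nodes M. \<Sum>k\<in>UNIV. \<Sum>m\<in>constraint_partners M k n. F (k, n, m))"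
    by (rule sum.swap)
  finally show ?thesis
    by (simp add: UNIV_constraint_kind constraint_partners_def sum.distrib add.assoc)
qed

text \<open>The multiplier \<lambda> n of the balance equation of agent n.\<close>
definition nodal_price :: "(constraint_kind \<times> 'n \<times> 'n \<Rightarrow> real) \<Rightarrow> 'n \<Rightarrow> real" where
  "nodal_price l n = l (BalUp, n, n) - l (BalDown, n, n)"

lemma constraint_sum_eq_nodal_form:
  assumes "valid_market M"
  shows "(\<Sum>i\<in>constraints M. l i * constraint_lin M i d) =
    nodal_form M (\<lambda>n. l (DemLo, n, n) - l (DemHi, n, n) - nodal_price l n)
      (\<lambda>n. l (GenLo, n, n) - l (GenHi, n, n) + nodal_price l n)
      (\<lambda>n m. nodal_price l n - l (Cap, n, m) - l (Coupling, n, m) - l (Coupling, m, n)) d"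
    (is "_ = nodal_form M ?\<alpha> ?\<beta> ?\<gamma> d")
proof -
  let ?\<gamma>' = "\<lambda>n m. nodal_price l n - l (Cap, n, m) - l (Coupling, n, m)"
  have "(\<Sum>i\<in>constraints M. l i * constraint_lin M i d) =
    nodal_form M ?\<alpha> ?\<beta> ?\<gamma>' d - (\<Sum>n\<in>nodes M. \<Sum>m\<in>peers M n. l (Coupling, n, m) * d (Trade n m))"
    unfolding sum_constraints[OF assms] nodal_form_def nodal_price_def sum_subtractf[symmetric]
    by (intro sum.cong refl)
      (simp add: sum.distrib sum_subtractf sum_distrib_left sum_negf algebra_simps)
  also have "(\<Sum>n\<in>nodes M. \<Sum>m\<in>peers M n. l (Coupling, n, m) * d (Trade n m)) =
      (\<Sum>n\<in>nodes M. \<Sum>m\<in>peers M n. l (Coupling, m, n) * d (Trade m n))"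
    by (rule sum_peers_swap[OF assms])
  also have "nodal_form M ?\<alpha> ?\<beta> ?\<gamma>' d - \<dots> = nodal_form M ?\<alpha> ?\<beta> ?\<gamma> d"
    unfolding nodal_form_def sum_subtractf[symmetric]
    by (intro sum.cong refl) (simp add: sum_subtractf left_diff_distrib sum.distrib[symmetric])
  finally show ?thesis .
qed

lemma market_program:
  assumes "valid_market M"
  shows "concave_quadratic_program (welfare M) (welfare_grad M) (welfare_curv M)
    (constraints M) (constraint_lin M)"
proof
  show "0 \<le> welfare_curv M d" for d
    unfolding welfare_curv_def using valid_marketD(4,5)[OF assms]
    by (auto intro!: sum_nonneg add_nonneg_nonneg simp: less_imp_le)
qed (simp_all add: valid_market_finite_constraints[OF assms] linear_form_constraint_lin
       welfare_grad_def linear_form_nodal_form welfare_expansion)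

definition market_multipliers :: "'n market \<Rightarrow> ('n \<Rightarrow> real) \<Rightarrow> ('n \<Rightarrow> real) \<Rightarrow>
    ('n \<Rightarrow> 'n \<Rightarrow> real) \<Rightarrow> (constraint_kind \<times> 'n \<times> 'n \<Rightarrow> real) \<Rightarrow> bool" where
  "market_multipliers M D G q l \<longleftrightarrow>
     (\<forall>i\<in>constraints M. 0 \<le> l i \<and> l i * (constraint_lin M i (profile D G q) + constraint_const M i) = 0) \<and>
     (\<forall>n\<in>nodes M.
        2 * ua M n * (D n - Dstar M n) - l (DemLo, n, n) + l (DemHi, n, n) + nodal_price l n = 0 \<and>
        ca M n * G n + cb M n - l (GenLo, n, n) + l (GenHi, n, n) - nodal_price l n = 0 \<and>
        (\<forall>m\<in>peers M n. pref M n m + l (Cap, n, m) + (l (Coupling, n, m) + l (Coupling, m, n))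
           - nodal_price l n = 0))"

lemma optimalP_iff_market_multipliers:
  assumes "valid_market M"
  shows "optimalP M D G q \<longleftrightarrow> feasibleP M D G q \<and> (\<exists>l. market_multipliers M D G q l)"
proof -
  interpret P: concave_quadratic_program "welfare M" "welfare_grad M" "welfare_curv M"
    "constraints M" "constraint_lin M" "constraint_const M"
    by (rule market_program[OF assms])
  have feasible: "feasibleP M D' G' q' \<longleftrightarrow> P.feasible (profile D' G' q')" for D' G' q'
    unfolding P.feasible_def feasibleP_iff_constraints ..
  have welfare: "welfare M (profile D' G' q') = SW M D' G' q'" for D' G' q'
    by (simp add: welfare_def)
  have "(\<forall>D' G' q'. feasibleP M D' G' q' \<longrightarrow> SW M D' G' q' \<le> SW M D G q) \<longleftrightarrow>
      (\<forall>x. P.feasible x \<longrightarrow> welfare M x \<le> welfare M (profile D G q))"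
    unfolding feasible welfare[symmetric]
    by (metis profile_coords)
  then have "optimalP M D G q \<longleftrightarrow>
      P.feasible (profile D G q) \<and> (\<forall>x. P.feasible x \<longrightarrow> welfare M x \<le> welfare M (profile D G q))"
    unfolding optimalP_def feasible by blast
  moreover have "P.lagrange_multipliers (profile D G q) l \<longleftrightarrow> market_multipliers M D G q l" for l
  proof -
    have "(\<forall>d. welfare_grad M (profile D G q) d + (\<Sum>i\<in>constraints M. l i * constraint_lin M i d) = 0) \<longleftrightarrow>
      (\<forall>n\<in>nodes M.
        2 * ua M n * (D n - Dstar M n) - l (DemLo, n, n) + l (DemHi, n, n) + nodal_price l n = 0 \<and>
        ca M n * G n + cb M n - l (GenLo, n, n) + l (GenHi, n, n) - nodal_price l n = 0 \<and>
        (\<forall>m\<in>peers M n. pref M n m + l (Cap, n, m) + (l (Coupling, n, m) + l (Coupling, m, n))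
           - nodal_price l n = 0))"
      unfolding welfare_grad_def constraint_sum_eq_nodal_form[OF assms] nodal_form_add
        nodal_form_eq_zero_iff[OF assms]
      by (intro ball_cong conj_cong refl) (auto simp: algebra_simps)
    then show ?thesis
      unfolding P.lagrange_multipliers_def market_multipliers_def by simp
  qed
  ultimately show ?thesis
    using P.max_iff_lagrange_multipliers feasible by blast
qed

lemma KKT_imp_feasibleP:
  assumes "\<And>n. n \<in> nodes M \<Longrightarrow> KKT M D G q n (mul n) (muh n) (nul n) (nuh n) (xi n) (zeta n) (lam n)"
  shows "feasibleP M D G q"
  unfolding feasibleP_def
proof (intro conjI ballI)
  fix n assume n: "n \<in> nodes M"
  note K = assms[OF n, unfolded KKT_def]
  show "Dlo M n \<le> D n" "D n \<le> Dhi M n" "Glo M n \<le> G n" "G n \<le> Ghi M n"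
    "D n = G n + dG M n + netimp M q n" using K by simp_all
  fix m assume m: "m \<in> peers M n"
  have "q m n \<le> kap M m n" "q m n \<le> - q n m" using K m by blast+
  then show "q m n \<le> kap M m n" "q m n + q n m \<le> 0" by simp_all
qed

lemma VE_imp_market_multipliers:
  assumes "VE M D G q"
  shows "feasibleP M D G q \<and> (\<exists>l. market_multipliers M D G q l)"
proof -
  obtain mul muh nul nuh xi zeta lam where
    K: "\<And>n. n \<in> nodes M \<Longrightarrow> KKT M D G q n (mul n) (muh n) (nul n) (nuh n) (xi n) (zeta n) (lam n)"
    and zeta_sym: "\<And>n m. n \<in> nodes M \<Longrightarrow> m \<in> peers M n \<Longrightarrow> zeta n m = zeta m n"
    using assms unfolding VE_def by blast
  txt \<open>The free price \<lambda> n is split into the multipliers of the two balance inequalities, and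
    the symmetric \<zeta> n m evenly between the two copies (Coupling, n, m), (Coupling, m, n) of
    the coupling constraint of the pair.\<close>
  define l where "l = (\<lambda>(k, n, m). case k of
      DemLo \<Rightarrow> mul n | DemHi \<Rightarrow> muh n | GenLo \<Rightarrow> nul n | GenHi \<Rightarrow> nuh n
    | BalUp \<Rightarrow> max (lam n) 0 | BalDown \<Rightarrow> max (- lam n) 0
    | Cap \<Rightarrow> xi n m | Coupling \<Rightarrow> zeta n m / 2)"
  have price: "nodal_price l n = lam n" for n
    unfolding nodal_price_def l_def by (simp add: max_def)
  have "0 \<le> l i \<and> l i * (constraint_lin M i (profile D G q) + constraint_const M i) = 0"
    if "i \<in> constraints M" for i
  proof -
    obtain k n m where i: "i = (k, n, m)" by (cases i)
    with that have n: "n \<in> nodes M" and m: "m \<in> constraint_partners M k n"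
      unfolding constraints_def by auto
    show ?thesis
      using K[OF n, unfolded KKT_def] m unfolding i
      by (cases k) (auto simp: l_def constraint_partners_def netimp_def)
  qed
  moreover have "2 * ua M n * (D n - Dstar M n) - l (DemLo, n, n) + l (DemHi, n, n) + lam n = 0 \<and>
      ca M n * G n + cb M n - l (GenLo, n, n) + l (GenHi, n, n) - lam n = 0 \<and>
      (\<forall>m\<in>peers M n. pref M n m + l (Cap, n, m) + (l (Coupling, n, m) + l (Coupling, m, n))
         - lam n = 0)" if n: "n \<in> nodes M" for n
    using K[OF n, unfolded KKT_def] zeta_sym[OF n] by (auto simp: l_def)
  ultimately have "market_multipliers M D G q l"
    unfolding market_multipliers_def price by blast
  then show ?thesis using KKT_imp_feasibleP[OF K] by blast
qed

lemma market_multipliersD: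
  assumes "market_multipliers M D G q l" "n \<in> nodes M" "m \<in> constraint_partners M k n"
  shows "0 \<le> l (k, n, m)"
    and "l (k, n, m) * (constraint_lin M (k, n, m) (profile D G q) + constraint_const M (k, n, m)) = 0"
  using assms unfolding market_multipliers_def constraints_def by auto

lemma market_multipliers_imp_KKT:
  assumes "valid_market M" "feasibleP M D G q" "market_multipliers M D G q l" "n \<in> nodes M"
  shows "KKT M D G q n (l (DemLo, n, n)) (l (DemHi, n, n)) (l (GenLo, n, n)) (l (GenHi, n, n))
    (\<lambda>m. l (Cap, n, m)) (\<lambda>m. l (Coupling, n, m) + l (Coupling, m, n)) (nodal_price l n)"
proof -
  note C = market_multipliersD[OF assms(3)]
  have node: "0 \<le> l (k, n, n)" "l (k, n, n) * (constraint_lin M (k, n, n) (profile D G q) +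
      constraint_const M (k, n, n)) = 0" if "k \<notin> {Cap, Coupling}" for k
    using C[OF assms(4), of n k] that unfolding constraint_partners_def by simp_all
  have cap: "0 \<le> l (Cap, n, m) \<and> l (Cap, n, m) * (kap M m n - q m n) = 0" if "m \<in> peers M n" for m
    using C[OF assms(4), of m Cap] that unfolding constraint_partners_def by simp
  have coupling: "0 \<le> l (Coupling, n', m') \<and> l (Coupling, n', m') * (q m' n' + q n' m') = 0"
    if "n' \<in> nodes M" "m' \<in> peers M n'" for n' m'
    using C[OF that(1), of m' Coupling] that(2) unfolding constraint_partners_def
    by (auto simp: add_eq_0_iff)
  have zeta: "0 \<le> l (Coupling, n, m) + l (Coupling, m, n) \<and>
      (l (Coupling, n, m) + l (Coupling, m, n)) * (- q m n - q n m) = 0" if m: "m \<in> peers M n" for m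
    using coupling[OF assms(4) m] coupling[OF valid_market_peers[OF assms(1,4) m]]
    by (simp add: algebra_simps)
  have F: "Dlo M n \<le> D n" "D n \<le> Dhi M n" "Glo M n \<le> G n" "G n \<le> Ghi M n"
    "D n = G n + dG M n + netimp M q n"
    "\<forall>m\<in>peers M n. q m n \<le> kap M m n" "\<forall>m\<in>peers M n. q m n + q n m \<le> 0"
    using assms(2,4) unfolding feasibleP_def by blast+
  have F': "q m n \<le> - q n m" if "m \<in> peers M n" for m
    using bspec[OF F(7) that] by linarith
  have S: "2 * ua M n * (D n - Dstar M n) - l (DemLo, n, n) + l (DemHi, n, n) + nodal_price l n = 0"
    "ca M n * G n + cb M n - l (GenLo, n, n) + l (GenHi, n, n) - nodal_price l n = 0"
    "\<forall>m\<in>peers M n. pref M n m + l (Cap, n, m) + (l (Coupling, n, m) + l (Coupling, m, n))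
       - nodal_price l n = 0"
    using assms(3,4) unfolding market_multipliers_def by blast+
  show ?thesis
    using node[of DemLo] node[of DemHi] node[of GenLo] node[of GenHi] cap zeta F F' S
    unfolding KKT_def by (simp add: algebra_simps)
qed

lemma market_multipliers_imp_VE:
  assumes "valid_market M" "feasibleP M D G q" "market_multipliers M D G q l"
  shows "VE M D G q"
  unfolding VE_def
  using market_multipliers_imp_KKT[OF assms]
  by (intro exI[of _ "\<lambda>n m. l (Coupling, n, m) + l (Coupling, m, n)"] exI) (auto simp: add.commute)

theorem proposition6:
  fixes M :: "'n market"
    and D G :: "'n \<Rightarrow> real" and q :: "'n \<Rightarrow> 'n \<Rightarrow> real"
  assumes "valid_market M"
  shows "VE M D G q \<longleftrightarrow> optimalP M D G q"
proof -
  have "VE M D G q \<longleftrightarrow> feasibleP M D G q \<and> (\<exists>l. market_multipliers M D G q l)"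
    using VE_imp_market_multipliers market_multipliers_imp_VE[OF assms] by blast
  also have "\<dots> \<longleftrightarrow> optimalP M D G q"
    using optimalP_iff_market_multipliers[OF assms] by blast
  finally show ?thesis .
qed

end
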